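(* Let $X \subset \mathbb{Z}^2$ and let $V_1,\dots,V_n \subset X$ be thick convex digital disks. Let $X'=\bigcup_{i=1}^n V_i$. For each $i$ let $C_i$ be a bounding curve of $V_i$, let $B_{1,i}$ be the union of the maximal horizontal and maximal vertical line segments contained in $C_i$, and let $B_{2,i}$ be the set of endpoints of maximal slanted line segments contained in $C_i$. Then $$B=(X\setminus X')\cup\bigcup_{i=1}^n (B_{1,i}\cup B_{2,i})$$ is a freezing set for $(X,c_2)$.
   Context: Adjacencies: for $x\neq y$ in $\mathbb{Z}^2$, $x,y$ are $c_1$-adjacent if they differ by 1 in exactly one coordinate and agree in the other; $c_2$-adjacent if each coordinate differs by at most 1. Write $x\leftrightarrow_\kappa y$ for $\kappa$-adjacency. A $\kappa$-path is a finite sequence of points with consecutive points equal or $\kappa$-adjacent. A function $f:(X,\kappa)\to(X,\kappa)$ is $\kappa$-continuous ($f\in C(X,\kappa)$) if $x\leftrightarrow_\kappa x'$ implies $f(x)=f(x')$ or $f(x)\leftrightarrow_\kappa f(x')$. $\mathrm{Fix}(f)=\{x: f(x)=x\}$. A set $A\subset X$ is a freezing set for $(X,\kappa)$ if every $f\in C(X,\kappa)$ with $A\subset \mathrm{Fix}(f)$ satisfies $f=\mathrm{id}_X$. A (digital) line segment is a $c_2$-connected set of collinear points of $\mathbb{Z}^2$; it is necessarily horizontal, vertical, or of slope $\pm1$ (called slanted). A $c_2$-closed curve is a $c_2$-path $s_0,\dots,s_{m-1}$ with $s_0=s_{m-1}$ and $s_i\ne s_j$ for $0<|i-j|<m-1$.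 If $S$ is a $c_2$-closed curve such that $\mathbb{Z}^2\setminus S$ has exactly two $c_1$-components, one finite and one infinite, the union $D$ of $S$ and the finite component is a digital disk, $S$ is a bounding curve of $D$, and the finite component is the interior $Int(S)$ (also written $Int(X)$). $Bd_2(X)=\{x\in X : \exists y\in\mathbb{Z}^2\setminus X,\ y\leftrightarrow_{c_2}x\}$. A digital disk $X$ is thick if for some bounding curve $S$ of $X$: (i) for every slanted segment $T$ of $Bd_2(X)$ and every non-endpoint $p\in T$ there is $c\in X$ with $c\leftrightarrow_{c_2}p$ but $c$ not $c_1$-adjacent to $p$ (i.e. $c$ is diagonally adjacent to $p$) on the interior side; (ii) if $p$ is the vertex of a $90^\circ$ interior angle $\theta$ of $S$, there is $q\in Int(X)$ such that, if $\theta$ has horizontal and vertical sides, $q\leftrightarrow_{c_2}p$ and $q$ is not $c_1$-adjacent to $p$, and if $\theta$ has slanted sides, $q\leftrightarrow_{c_1}p$; (iii) if $p$ is the vertex of a $135^\circ$ interior angle $\theta$ of $S$, there are $b,b'\in X$ in the interior of $\theta$ with $b\leftrightarrow_{c_2}p$, $b$ not $c_1$-adjacent to $p$, and $b'\leftrightarrow_{c_1}p$. A set $X\subset\mathbb{Z}^2$ is (digitally) convex if $X$ equals the set of integer points of its Euclidean convex hull. *)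

theory Defs
  imports "HOL-Analysis.Analysis"
begin

type_synonym pt = "int \<times> int"

definition c1_adj :: "pt \<Rightarrow> pt \<Rightarrow> bool" where
  "c1_adj x y \<longleftrightarrow> x \<noteq> y \<and> \<bar>fst x - fst y\<bar> + \<bar>snd x - snd y\<bar> = 1"

definition c2_adj :: "pt \<Rightarrow> pt \<Rightarrow> bool" where
  "c2_adj x y \<longleftrightarrow> x \<noteq> y \<and> \<bar>fst x - fst y\<bar> \<le> 1 \<and> \<bar>snd x - snd y\<bar> \<le> 1"

text \<open>f is kappa-continuous as a self-map of X (only values on X matter).\<close>
definition digitally_continuous :: "pt set \<Rightarrow> (pt \<Rightarrow> pt \<Rightarrow> bool) \<Rightarrow> (pt \<Rightarrow> pt) \<Rightarrow> bool" where
  "digitally_continuous X \<kappa> f \<longleftrightarrow>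
     (\<forall>x\<in>X. f x \<in> X) \<and>
     (\<forall>x\<in>X. \<forall>x'\<in>X. \<kappa> x x' \<longrightarrow> f x = f x' \<or> \<kappa> (f x) (f x'))"

definition freezing_set :: "pt set \<Rightarrow> (pt \<Rightarrow> pt \<Rightarrow> bool) \<Rightarrow> pt set \<Rightarrow> bool" where
  "freezing_set X \<kappa> A \<longleftrightarrow> A \<subseteq> X \<and>
     (\<forall>f. digitally_continuous X \<kappa> f \<and> (\<forall>a\<in>A. f a = a) \<longrightarrow> (\<forall>x\<in>X. f x = x))"

definition adj_in :: "(pt \<Rightarrow> pt \<Rightarrow> bool) \<Rightarrow> pt set \<Rightarrow> pt \<Rightarrow> pt \<Rightarrow> bool" where
  "adj_in \<kappa> Y a b \<longleftrightarrow> a \<in> Y \<and> b \<in> Y \<and> \<kappa> a b"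

definition connected_in :: "(pt \<Rightarrow> pt \<Rightarrow> bool) \<Rightarrow> pt set \<Rightarrow> bool" where
  "connected_in \<kappa> Y \<longleftrightarrow> (\<forall>p\<in>Y. \<forall>q\<in>Y. (adj_in \<kappa> Y)\<^sup>*\<^sup>* p q)"

definition component_of :: "(pt \<Rightarrow> pt \<Rightarrow> bool) \<Rightarrow> pt set \<Rightarrow> pt \<Rightarrow> pt set" where
  "component_of \<kappa> Y x = {y. (adj_in \<kappa> Y)\<^sup>*\<^sup>* x y}"

definition components_of :: "(pt \<Rightarrow> pt \<Rightarrow> bool) \<Rightarrow> pt set \<Rightarrow> pt set set" where
  "components_of \<kappa> Y = {component_of \<kappa> Y x | x. x \<in> Y}"

definition closed_curve :: "(nat \<Rightarrow> pt) \<Rightarrow> nat \<Rightarrow> bool" where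
  "closed_curve s m \<longleftrightarrow> m \<ge> 1 \<and> s 0 = s (m - 1) \<and>
     (\<forall>i. i + 1 < m \<longrightarrow> s i = s (i + 1) \<or> c2_adj (s i) (s (i + 1))) \<and>
     (\<forall>i j. i < j \<and> j < m \<and> j - i < m - 1 \<longrightarrow> s i \<noteq> s j)"

definition curve_set :: "(nat \<Rightarrow> pt) \<Rightarrow> nat \<Rightarrow> pt set" where
  "curve_set s m = s ` {..<m}"

definition bounding_curve :: "pt set \<Rightarrow> (nat \<Rightarrow> pt) \<Rightarrow> nat \<Rightarrow> bool" where
  "bounding_curve D s m \<longleftrightarrow> closed_curve s m \<and>
     (\<exists>F I. components_of c1_adj (UNIV - curve_set s m) = {F, I} \<and> finite F \<and> infinite I
            \<and> D = curve_set s m \<union> F)"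

definition digital_disk :: "pt set \<Rightarrow> bool" where
  "digital_disk D \<longleftrightarrow> (\<exists>s m. bounding_curve D s m)"

definition curve_interior :: "(nat \<Rightarrow> pt) \<Rightarrow> nat \<Rightarrow> pt set" where
  "curve_interior s m = \<Union>{F \<in> components_of c1_adj (UNIV - curve_set s m). finite F}"

definition Bd2 :: "pt set \<Rightarrow> pt set" where
  "Bd2 X = {x \<in> X. \<exists>y. y \<notin> X \<and> c2_adj y x}"

text \<open>Keys of the four line directions: a set is contained in a horizontal
 (resp. vertical, slope 1, slope -1) line iff the key is constant on it.\<close>
definition key_h :: "pt \<Rightarrow> int" where "key_h p = snd p"
definition key_v :: "pt \<Rightarrow> int" where "key_v p = fst p"
definition key_d1 :: "pt \<Rightarrow> int" where "key_d1 p = fst p - snd p"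
definition key_d2 :: "pt \<Rightarrow> int" where "key_d2 p = fst p + snd p"

definition line_seg :: "(pt \<Rightarrow> int) \<Rightarrow> pt set \<Rightarrow> bool" where
  "line_seg k T \<longleftrightarrow> card T \<ge> 2 \<and> (\<forall>p\<in>T. \<forall>q\<in>T. k p = k q) \<and> connected_in c2_adj T"

definition max_seg_in :: "(pt \<Rightarrow> int) \<Rightarrow> pt set \<Rightarrow> pt set \<Rightarrow> bool" where
  "max_seg_in k C T \<longleftrightarrow> line_seg k T \<and> T \<subseteq> C \<and>
     (\<forall>T'. line_seg k T' \<and> T' \<subseteq> C \<and> T \<subseteq> T' \<longrightarrow> T' = T)"

text \<open>Endpoints of a slanted segment (extreme first coordinates).\<close>
definition seg_endpoints :: "pt set \<Rightarrow> pt set" where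
  "seg_endpoints T = {p \<in> T. fst p = Min (fst ` T) \<or> fst p = Max (fst ` T)}"

text \<open>The 8 directions, numbered counterclockwise in steps of 45 degrees.\<close>
definition dirvec :: "nat \<Rightarrow> pt" where
  "dirvec k = [(1,0),(1,1),(0,1),(-1,1),(-1,0),(-1,-1),(0,-1),(1,-1)] ! (k mod 8)"

definition dir_idx :: "pt \<Rightarrow> nat" where
  "dir_idx d = (THE k. k < 8 \<and> dirvec k = d)"

definition vsub :: "pt \<Rightarrow> pt \<Rightarrow> pt" where
  "vsub a b = (fst a - fst b, snd a - snd b)"

definition vadd :: "pt \<Rightarrow> pt \<Rightarrow> pt" where
  "vadd a b = (fst a + fst b, snd a + snd b)"

text \<open>Twice the signed (shoelace) area; positive iff the curve is counterclockwise.\<close>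
definition signed_area2 :: "(nat \<Rightarrow> pt) \<Rightarrow> nat \<Rightarrow> int" where
  "signed_area2 s m = (\<Sum>i<m - 1. fst (s i) * snd (s (i + 1)) - fst (s (i + 1)) * snd (s i))"

text \<open>For vertex index i < m-1 of the closed curve (indices taken cyclically mod m-1):
 prv/nxt are direction indices of the rays towards the previous/next point.\<close>
definition prv_dir :: "(nat \<Rightarrow> pt) \<Rightarrow> nat \<Rightarrow> nat \<Rightarrow> nat" where
  "prv_dir s m i = dir_idx (vsub (s ((i + (m - 1) - 1) mod (m - 1))) (s i))"

definition nxt_dir :: "(nat \<Rightarrow> pt) \<Rightarrow> nat \<Rightarrow> nat \<Rightarrow> nat" where
  "nxt_dir s m i = dir_idx (vsub (s ((i + 1) mod (m - 1))) (s i))"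

text \<open>Interior angle at s i, in units of 45 degrees, and the direction index from
 which the interior of the angle is swept counterclockwise.\<close>
definition int_angle :: "(nat \<Rightarrow> pt) \<Rightarrow> nat \<Rightarrow> nat \<Rightarrow> nat" where
  "int_angle s m i =
     (if signed_area2 s m > 0 then (prv_dir s m i + 8 - nxt_dir s m i) mod 8
      else (nxt_dir s m i + 8 - prv_dir s m i) mod 8)"

definition angle_start :: "(nat \<Rightarrow> pt) \<Rightarrow> nat \<Rightarrow> nat \<Rightarrow> nat" where
  "angle_start s m i = (if signed_area2 s m > 0 then nxt_dir s m i else prv_dir s m i)"

definition angle_interior_nbrs :: "(nat \<Rightarrow> pt) \<Rightarrow> nat \<Rightarrow> nat \<Rightarrow> pt set" where
  "angle_interior_nbrs s m i =
     {vadd (s i) (dirvec (angle_start s m i + j)) | j. 0 < j \<and> j < int_angle s m i}"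

definition thick_cond_slanted :: "pt set \<Rightarrow> bool" where
  "thick_cond_slanted X \<longleftrightarrow>
     (\<forall>k\<in>{key_d1, key_d2}. \<forall>T. line_seg k T \<and> T \<subseteq> Bd2 X \<longrightarrow>
        (\<forall>p \<in> T - seg_endpoints T. \<exists>c\<in>X. c2_adj c p \<and> \<not> c1_adj c p \<and> k c \<noteq> k p))"

definition thick_cond_90 :: "pt set \<Rightarrow> (nat \<Rightarrow> pt) \<Rightarrow> nat \<Rightarrow> bool" where
  "thick_cond_90 X s m \<longleftrightarrow>
     (\<forall>i < m - 1. int_angle s m i = 2 \<longrightarrow>
        (\<exists>q \<in> curve_interior s m. c2_adj q (s i) \<and>
           (if even (nxt_dir s m i) then \<not> c1_adj q (s i) else c1_adj q (s i))))"

definition thick_cond_135 :: "pt set \<Rightarrow> (nat \<Rightarrow> pt) \<Rightarrow> nat \<Rightarrow> bool" where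
  "thick_cond_135 X s m \<longleftrightarrow>
     (\<forall>i < m - 1. int_angle s m i = 3 \<longrightarrow>
        (\<exists>b b'. b \<in> X \<and> b' \<in> X \<and> b \<in> angle_interior_nbrs s m i \<and> b' \<in> angle_interior_nbrs s m i
           \<and> c2_adj b (s i) \<and> \<not> c1_adj b (s i) \<and> c1_adj b' (s i)))"

definition thick :: "pt set \<Rightarrow> bool" where
  "thick X \<longleftrightarrow> (\<exists>s m. bounding_curve X s m \<and> thick_cond_slanted X \<and>
                       thick_cond_90 X s m \<and> thick_cond_135 X s m)"

definition emb :: "pt \<Rightarrow> real \<times> real" where
  "emb p = (real_of_int (fst p), real_of_int (snd p))"

definition digitally_convex :: "pt set \<Rightarrow> bool" where
  "digitally_convex X \<longleftrightarrow> X = {p. emb p \<in> convex hull (emb ` X)}"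

definition B1_of :: "pt set \<Rightarrow> pt set" where
  "B1_of C = \<Union>{T. max_seg_in key_h C T \<or> max_seg_in key_v C T}"

definition B2_of :: "pt set \<Rightarrow> pt set" where
  "B2_of C = \<Union>{seg_endpoints T | T. max_seg_in key_d1 C T \<or> max_seg_in key_d2 C T}"

end

theory Submission
  imports Defs
begin

text \<open>A c2-continuous map f changes each coordinate by at most 1 along an adjacency.
  Hence if a c2-path of length l joins two fixed points whose coordinates differ by l in one
  coordinate, that coordinate is preserved by f at every point of the path.  A slanted boundary
  segment is such a path in both coordinates between its fixed endpoints; a point of the
  interior of a disk lies on a horizontal and on a vertical such path between boundary points.\<close>

lemma int_steps_lipschitz:
  fixes g :: "int \<Rightarrow> int"
  assumes steps: "\<And>a. lo \<le> a \<Longrightarrow> a < hi \<Longrightarrow> \<bar>g (a + 1) - g a\<bar> \<le> 1"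
    and "lo \<le> a" "a \<le> b" "b \<le> hi"
  shows "\<bar>g b - g a\<bar> \<le> b - a"
proof -
  have "b \<le> hi \<longrightarrow> \<bar>g b - g a\<bar> \<le> b - a"
    using \<open>a \<le> b\<close>
  proof (induction b rule: int_ge_induct)
    case base
    show ?case by simp
  next
    case (step b)
    show ?case
    proof
      assume "b + 1 \<le> hi"
      then have "\<bar>g (b + 1) - g b\<bar> \<le> 1" using steps \<open>lo \<le> a\<close> step.hyps by simp
      with step \<open>b + 1 \<le> hi\<close> show "\<bar>g (b + 1) - g a\<bar> \<le> b + 1 - a" by linarith
    qed
  qed
  with \<open>b \<le> hi\<close> show ?thesis by blast
qed

lemma tight_int_steps_unique:
  fixes g h :: "int \<Rightarrow> int"
  assumes g: "\<And>a. lo \<le> a \<Longrightarrow> a < hi \<Longrightarrow> \<bar>g (a + 1) - g a\<bar> \<le> 1"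
    and h: "\<And>a. lo \<le> a \<Longrightarrow> a < hi \<Longrightarrow> \<bar>h (a + 1) - h a\<bar> \<le> 1"
    and ends: "g lo = h lo" "g hi = h hi" and tight: "\<bar>g hi - g lo\<bar> = hi - lo"
    and a: "lo \<le> a" "a \<le> hi"
  shows "g a = h a"
proof -
  have "\<bar>g a - g lo\<bar> \<le> a - lo" "\<bar>g hi - g a\<bar> \<le> hi - a"
    using int_steps_lipschitz[of lo hi g] g a by auto
  moreover have "\<bar>h a - h lo\<bar> \<le> a - lo" "\<bar>h hi - h a\<bar> \<le> hi - a"
    using int_steps_lipschitz[of lo hi h] h a by auto
  ultimately show ?thesis using ends tight by linarith
qed

lemma continuous_coord_step:
  assumes "digitally_continuous X c2_adj f" "x \<in> X" "y \<in> X" "c2_adj x y"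
    and "\<pi> = fst \<or> \<pi> = snd"
  shows "\<bar>\<pi> (f x) - \<pi> (f y)\<bar> \<le> 1"
  using assms unfolding digitally_continuous_def c2_adj_def by fastforce

lemma fixed_coord_on_tight_path:
  assumes cont: "digitally_continuous X c2_adj f"
    and path: "\<And>a. lo \<le> a \<Longrightarrow> a < hi \<Longrightarrow> c2_adj (P a) (P (a + 1))"
    and inX: "\<And>a. lo \<le> a \<Longrightarrow> a \<le> hi \<Longrightarrow> P a \<in> X"
    and fix_lo: "f (P lo) = P lo" and fix_hi: "f (P hi) = P hi"
    and \<pi>: "\<pi> = fst \<or> \<pi> = snd" and tight: "\<bar>\<pi> (P hi) - \<pi> (P lo)\<bar> = hi - lo"
    and a: "lo \<le> a" "a \<le> hi"
  shows "\<pi> (f (P a)) = \<pi> (P a)"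
proof (rule tight_int_steps_unique[of lo hi "\<lambda>a. \<pi> (f (P a))" "\<lambda>a. \<pi> (P a)"])
  fix b assume b: "lo \<le> b" "b < hi"
  show "\<bar>\<pi> (f (P (b + 1))) - \<pi> (f (P b))\<bar> \<le> 1"
    using continuous_coord_step[OF cont inX[of b] inX[of "b + 1"] path[OF b] \<pi>] b
    by (simp add: abs_minus_commute)
  show "\<bar>\<pi> (P (b + 1)) - \<pi> (P b)\<bar> \<le> 1"
    using path[OF b] \<pi> by (auto simp: c2_adj_def abs_minus_commute)
qed (use fix_lo fix_hi tight a in simp_all)

lemma connected_c2_fst_interval:
  assumes "connected_in c2_adj T" "p \<in> T" "q \<in> T" "fst p \<le> a" "a \<le> fst q"
  shows "\<exists>z\<in>T. fst z = a"
proof -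
  have "\<forall>a. fst p \<le> a \<and> a \<le> fst z \<longrightarrow> (\<exists>w\<in>T. fst w = a)"
    if "(adj_in c2_adj T)\<^sup>*\<^sup>* p z" for z
    using that
  proof (induction rule: rtranclp_induct)
    case base
    then show ?case using \<open>p \<in> T\<close> by force
  next
    case (step y z)
    show ?case
    proof (intro allI impI)
      fix a assume a: "fst p \<le> a \<and> a \<le> fst z"
      show "\<exists>w\<in>T. fst w = a"
      proof (cases "a \<le> fst y")
        case True
        then show ?thesis using step.IH a by blast
      next
        case False
        then have "a = fst z" using a step.hyps(2) by (auto simp: adj_in_def c2_adj_def)
        then show ?thesis using step.hyps(2) by (auto simp: adj_in_def)
      qed
    qed
  qed
  then show ?thesis using assms unfolding connected_in_def by blast
qed

lemma line_seg_finite: "line_seg k T \<Longrightarrow> finite T"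
  unfolding line_seg_def by (metis card.infinite not_numeral_le_zero)

lemma line_seg_pair:
  assumes "c2_adj x q" "k x = k q"
  shows "line_seg k {x, q}"
proof -
  have "adj_in c2_adj {x, q} p p'" if "p \<in> {x, q}" "p' \<in> {x, q}" "p \<noteq> p'" for p p'
    using assms(1) that by (auto simp: adj_in_def c2_adj_def)
  then have "(adj_in c2_adj {x, q})\<^sup>*\<^sup>* p p'" if "p \<in> {x, q}" "p' \<in> {x, q}" for p p'
    using that by (metis r_into_rtranclp rtranclp.rtrancl_refl)
  moreover have "x \<noteq> q" using assms(1) by (simp add: c2_adj_def)
  ultimately show ?thesis using assms(2) unfolding line_seg_def connected_in_def by auto
qed

lemma max_seg_in_exists:
  assumes "finite C" "line_seg k T0" "T0 \<subseteq> C" "x \<in> T0"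
  shows "\<exists>T. max_seg_in k C T \<and> x \<in> T"
proof -
  let ?S = "{T. line_seg k T \<and> T \<subseteq> C}"
  have fin: "finite ?S"
    using \<open>finite C\<close> by (simp add: finite_subset[of _ "Pow C"] subset_eq)
  have T0: "T0 \<in> ?S" using assms(2,3) by simp
  obtain T where T: "T \<in> ?S" "T0 \<subseteq> T" and max: "\<forall>T'\<in>?S. T \<subseteq> T' \<longrightarrow> T = T'"
    using finite_has_maximal2[OF fin T0] by blast
  have "max_seg_in k C T" using T max unfolding max_seg_in_def by auto
  with T \<open>x \<in> T0\<close> show ?thesis by blast
qed

lemma slanted_segment_fixed:
  assumes cont: "digitally_continuous X c2_adj f"
    and seg: "line_seg k T" and k: "k = key_d1 \<or> k = key_d2" and TX: "T \<subseteq> X"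
    and fix_ends: "\<forall>b\<in>seg_endpoints T. f b = b" and x: "x \<in> T"
  shows "f x = x"
proof -
  obtain \<sigma> e :: int where \<sigma>: "\<sigma> = 1 \<or> \<sigma> = -1" and line: "\<forall>z\<in>T. snd z = \<sigma> * fst z + e"
  proof -
    have "\<forall>z\<in>T. k z = k x" using seg x unfolding line_seg_def by blast
    with k that[of 1 "- key_d1 x"] that[of "-1" "key_d2 x"] show thesis
      by (auto simp: key_d1_def key_d2_def algebra_simps)
  qed
  define P where "P a = (a, \<sigma> * a + e)" for a
  define lo where "lo = Min (fst ` T)"
  define hi where "hi = Max (fst ` T)"
  have fin: "finite T" using seg by (rule line_seg_finite)
  have on_line: "P (fst z) = z" if "z \<in> T" for z
    using line that by (simp add: P_def prod_eq_iff)
  obtain p q where p: "p \<in> T" "fst p = lo" and q: "q \<in> T" "fst q = hi"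
  proof -
    have "lo \<in> fst ` T" "hi \<in> fst ` T"
      using fin x unfolding lo_def hi_def by (auto intro: Min_in Max_in)
    then show thesis using that by blast
  qed
  have inT: "P a \<in> T" if a: "lo \<le> a" "a \<le> hi" for a
  proof -
    obtain z where "z \<in> T" "fst z = a"
      using connected_c2_fst_interval[of T p q a] seg p q a unfolding line_seg_def by blast
    then show ?thesis using on_line by metis
  qed
  have x_range: "lo \<le> fst x" "fst x \<le> hi"
    using fin x unfolding lo_def hi_def by auto
  have "P lo \<in> seg_endpoints T" "P hi \<in> seg_endpoints T"
    using inT[of lo] inT[of hi] x_range
    unfolding seg_endpoints_def lo_def[symmetric] hi_def[symmetric] by (simp_all add: P_def)
  then have fix_lo: "f (P lo) = P lo" and fix_hi: "f (P hi) = P hi"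
    using fix_ends by blast+
  have "\<pi> (f (P (fst x))) = \<pi> (P (fst x))" if \<pi>: "\<pi> = fst \<or> \<pi> = snd" for \<pi>
  proof (rule fixed_coord_on_tight_path[OF cont _ _ fix_lo fix_hi \<pi> _ x_range])
    show "c2_adj (P a) (P (a + 1))" for a
      using \<sigma> by (auto simp: P_def c2_adj_def algebra_simps)
    show "\<bar>\<pi> (P hi) - \<pi> (P lo)\<bar> = hi - lo"
      using \<pi> \<sigma> x_range by (elim disjE) (simp_all add: P_def algebra_simps)
  qed (use inT TX in auto)
  then show ?thesis using on_line[OF x] by (simp add: prod_eq_iff)
qed

lemma components_of_subset: "F \<in> components_of \<kappa> Y \<Longrightarrow> F \<subseteq> Y"
  by (auto simp: components_of_def component_of_def adj_in_def elim: rtranclp.cases)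

lemma components_of_nonempty: "F \<in> components_of \<kappa> Y \<Longrightarrow> \<exists>y. y \<in> F"
  by (auto simp: components_of_def component_of_def)

lemma component_of_closed:
  "F \<in> components_of \<kappa> Y \<Longrightarrow> x \<in> F \<Longrightarrow> (adj_in \<kappa> Y)\<^sup>*\<^sup>* x z \<Longrightarrow> z \<in> F"
  by (auto simp: components_of_def component_of_def intro: rtranclp_trans)

definition ray :: "pt \<Rightarrow> pt \<Rightarrow> int \<Rightarrow> pt" where
  "ray x d t = (fst x + t * fst d, snd x + t * snd d)"

lemma ray_0 [simp]: "ray x d 0 = x"
  by (simp add: ray_def)

text \<open>The hypothesis c1_adj (0, 0) d below says that d is one of the four unit axis vectors.\<close>

lemma ray_step: "c1_adj (0, 0) d \<Longrightarrow> c1_adj (ray x d t) (ray x d (t + 1))"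
  by (auto simp: ray_def c1_adj_def algebra_simps)

lemma ray_inj: "d \<noteq> (0, 0) \<Longrightarrow> inj (ray x d)"
  by (auto simp: inj_def ray_def prod_eq_iff)

lemma ray_reverse: "ray x (- fst d, - snd d) t = ray x d (- t)"
  by (simp add: ray_def)

lemma ray_path_avoiding:
  assumes "c1_adj (0, 0) d" "\<forall>j\<le>J. ray x d (int j) \<notin> C"
  shows "(adj_in c1_adj (UNIV - C))\<^sup>*\<^sup>* x (ray x d (int J))"
  using assms(2)
proof (induction J)
  case 0
  then show ?case by simp
next
  case (Suc J)
  then have "(adj_in c1_adj (UNIV - C))\<^sup>*\<^sup>* x (ray x d (int J))" by simp
  moreover have "adj_in c1_adj (UNIV - C) (ray x d (int J)) (ray x d (int (Suc J)))"
    using Suc.prems ray_step[OF assms(1), of x "int J"] by (auto simp: adj_in_def add.commute)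
  ultimately show ?case by (rule rtranclp.rtrancl_into_rtrancl)
qed

lemma finite_component_ray_exit:
  assumes F: "F \<in> components_of c1_adj (UNIV - C)" "finite F" "x \<in> F" and d: "c1_adj (0, 0) d"
  obtains J where "ray x d (int J) \<in> C" "\<forall>j<J. ray x d (int j) \<in> F"
proof -
  have "\<exists>j. ray x d (int j) \<in> C"
  proof (rule ccontr)
    assume "\<nexists>j. ray x d (int j) \<in> C"
    then have "range (ray x d \<circ> int) \<subseteq> F"
      using component_of_closed[OF F(1,3) ray_path_avoiding[OF d]] by auto
    moreover have "inj (ray x d \<circ> int)"
      using d by (intro inj_compose ray_inj) (auto simp: c1_adj_def inj_of_nat)
    ultimately show False
      using F(2) finite_subset range_inj_infinite by blast
  qed
  then obtain J where J: "ray x d (int J) \<in> C" and least: "\<forall>j<J. ray x d (int j) \<notin> C"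
    using exists_least_iff[of "\<lambda>j. ray x d (int j) \<in> C"] by blast
  have "ray x d (int j) \<in> F" if "j < J" for j
    using component_of_closed[OF F(1,3) ray_path_avoiding[OF d]] least that by auto
  then show thesis using that J by blast
qed

lemma finite_component_fixed:
  assumes cont: "digitally_continuous X c2_adj f"
    and F: "F \<in> components_of c1_adj (UNIV - C)" "finite F" "x \<in> F"
    and X: "F \<union> C \<subseteq> X" and fix_C: "\<forall>c\<in>C. f c = c"
  shows "f x = x"
proof -
  have "\<pi> (f x) = \<pi> x" if \<pi>d: "\<pi> = fst \<and> d = (1, 0) \<or> \<pi> = snd \<and> d = (0, 1)" for \<pi> and d :: pt
  proof -
    have \<pi>: "\<pi> = fst \<or> \<pi> = snd" and d: "c1_adj (0, 0) d" "c1_adj (0, 0) (- fst d, - snd d)"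
      using \<pi>d by (auto simp: c1_adj_def)
    obtain J1 where J1: "ray x d (int J1) \<in> C" "\<forall>j<J1. ray x d (int j) \<in> F"
      using finite_component_ray_exit[OF F d(1)] by blast
    obtain J2 where J2: "ray x d (- int J2) \<in> C" "\<forall>j<J2. ray x d (- int j) \<in> F"
      using finite_component_ray_exit[OF F d(2)] by (auto simp: ray_reverse)
    have inX: "ray x d a \<in> X" if "- int J2 \<le> a" "a \<le> int J1" for a
    proof (cases "0 \<le> a")
      case True
      then obtain j where a: "a = int j" by (metis nonneg_int_cases)
      with that have "j < J1 \<or> j = J1" by auto
      then show ?thesis using J1 X a by auto
    next
      case False
      then obtain j where a: "a = - int j" by (metis neg_0_le_iff_le nle_le nonneg_int_cases minus_minus)
      with that have "j < J2 \<or> j = J2" by auto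
      then show ?thesis using J2 X a by auto
    qed
    have "\<pi> (f (ray x d 0)) = \<pi> (ray x d 0)"
    proof (rule fixed_coord_on_tight_path[OF cont _ inX _ _ \<pi>])
      show "c2_adj (ray x d a) (ray x d (a + 1))" for a
        using ray_step[OF d(1), of x a] by (auto simp: c1_adj_def c2_adj_def)
      show "\<bar>\<pi> (ray x d (int J1)) - \<pi> (ray x d (- int J2))\<bar> = int J1 - - int J2"
        using \<pi>d by (auto simp: ray_def)
    qed (use J1 J2 fix_C in auto)
    then show ?thesis by simp
  qed
  from this[of fst "(1, 0)"] this[of snd "(0, 1)"] show ?thesis by (simp add: prod_eq_iff)
qed

text \<open>A single point cannot bound a finite component: some axis-parallel ray from any
  other point misses it.\<close>
lemma bounding_curve_length_ge3:
  assumes "bounding_curve D s m"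
  shows "m \<ge> 3"
proof (rule ccontr)
  assume "\<not> m \<ge> 3"
  from assms obtain F I where cc: "closed_curve s m"
    and F: "F \<in> components_of c1_adj (UNIV - curve_set s m)" "finite F"
    unfolding bounding_curve_def by blast
  have "m = 1 \<or> m = 2" using cc \<open>\<not> m \<ge> 3\<close> unfolding closed_curve_def by auto
  moreover have "s 0 = s (m - 1)" using cc unfolding closed_curve_def by simp
  ultimately have curve: "curve_set s m = {s 0}"
    by (elim disjE) (simp_all add: curve_set_def lessThan_Suc numeral_2_eq_2)
  obtain y where y: "y \<in> F" using components_of_nonempty[OF F(1)] by blast
  then have "y \<noteq> s 0" using components_of_subset[OF F(1)] curve by auto
  define d :: pt where "d = (if snd y \<noteq> snd (s 0) then (1, 0) else (0, 1))"
  have "c1_adj (0, 0) d" by (simp add: d_def c1_adj_def)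
  then obtain J where "ray y d (int J) \<in> {s 0}"
    using finite_component_ray_exit[OF F[unfolded curve] y] by blast
  then show False using \<open>y \<noteq> s 0\<close> by (auto simp: d_def ray_def prod_eq_iff split: if_splits)
qed

lemma closed_curve_c2_neighbour:
  assumes cc: "closed_curve s m" and m: "m \<ge> 3" and x: "x \<in> curve_set s m"
  shows "\<exists>q\<in>curve_set s m. c2_adj x q"
proof -
  obtain k where k: "k < m" "x = s k" using x by (auto simp: curve_set_def)
  define i where "i = (if k + 1 < m then k else 0)"
  have "k + 1 < m \<or> k = m - 1" using k(1) by linarith
  then have i: "i + 1 < m" "s i = x"
    using cc k m unfolding i_def closed_curve_def by auto
  have "s i \<noteq> s (i + 1)"
    using cc i(1) m unfolding closed_curve_def by (auto dest!: spec[of _ i] spec[of _ "i + 1"])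
  moreover have "s i = s (i + 1) \<or> c2_adj (s i) (s (i + 1))"
    using cc i(1) unfolding closed_curve_def by blast
  ultimately have "c2_adj x (s (i + 1))" using i(2) by simp
  then show ?thesis using i(1) by (auto simp: curve_set_def)
qed

text \<open>Every point of C lies on a maximal segment of C through one of its neighbours;
  horizontal and vertical ones lie in B1, slanted ones are pinned by their endpoints in B2.\<close>
lemma B1_B2_fixed:
  assumes cont: "digitally_continuous X c2_adj f"
    and fin: "finite C" and CX: "C \<subseteq> X" and nbr: "\<forall>x\<in>C. \<exists>q\<in>C. c2_adj x q"
    and fix_B: "\<forall>b\<in>B1_of C \<union> B2_of C. f b = b" and x: "x \<in> C"
  shows "f x = x"
proof -
  obtain q where q: "q \<in> C" "c2_adj x q" using nbr x by blast
  have "key_h x = key_h q \<or> key_v x = key_v q \<or> key_d1 x = key_d1 q \<or> key_d2 x = key_d2 q"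
    using q(2) by (auto simp: c2_adj_def key_h_def key_v_def key_d1_def key_d2_def)
  then obtain k where k: "k \<in> {key_h, key_v, key_d1, key_d2}" "k x = k q" by blast
  obtain T where T: "max_seg_in k C T" "x \<in> T"
    using max_seg_in_exists[OF fin line_seg_pair[OF q(2) k(2)]] q x by blast
  show ?thesis
  proof (cases "k = key_d1 \<or> k = key_d2")
    case True
    have "seg_endpoints T \<subseteq> B2_of C" using T(1) True unfolding B2_of_def by blast
    then show ?thesis
      using slanted_segment_fixed[OF cont _ True _ _ T(2)] T(1) CX fix_B
      unfolding max_seg_in_def by blast
  next
    case False
    then have "x \<in> B1_of C" using T k(1) unfolding B1_of_def by blast
    then show ?thesis using fix_B by blast
  qed
qed

lemma disk_fixed:
  assumes cont: "digitally_continuous X c2_adj f"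
    and bc: "bounding_curve D s m" and DX: "D \<subseteq> X"
    and fix_B: "\<forall>b\<in>B1_of (curve_set s m) \<union> B2_of (curve_set s m). f b = b" and x: "x \<in> D"
  shows "f x = x"
proof -
  obtain F I where cc: "closed_curve s m"
    and F: "F \<in> components_of c1_adj (UNIV - curve_set s m)" "finite F"
    and D: "D = curve_set s m \<union> F"
    using bc unfolding bounding_curve_def by blast
  have C_X: "curve_set s m \<subseteq> X" using DX D by blast
  have fix_C: "\<forall>c\<in>curve_set s m. f c = c"
  proof
    fix c assume "c \<in> curve_set s m"
    moreover have "finite (curve_set s m)" by (simp add: curve_set_def)
    moreover have "\<forall>x\<in>curve_set s m. \<exists>q\<in>curve_set s m. c2_adj x q"
      using closed_curve_c2_neighbour[OF cc bounding_curve_length_ge3[OF bc]] by blast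
    ultimately show "f c = c" using B1_B2_fixed[OF cont _ C_X _ fix_B] by blast
  qed
  show ?thesis
  proof (cases "x \<in> curve_set s m")
    case False
    then have "x \<in> F" using x D by blast
    moreover have "F \<union> curve_set s m \<subseteq> X" using DX D by blast
    ultimately show ?thesis using finite_component_fixed[OF cont F _ _ fix_C] by blast
  qed (use fix_C in blast)
qed

lemma B1_of_subset: "B1_of C \<subseteq> C"
  unfolding B1_of_def max_seg_in_def by auto

lemma B2_of_subset: "B2_of C \<subseteq> C"
  unfolding B2_of_def max_seg_in_def seg_endpoints_def by auto

lemma bounding_curve_B1_B2_subset:
  assumes "bounding_curve D s m"
  shows "B1_of (curve_set s m) \<union> B2_of (curve_set s m) \<subseteq> D"
proof -
  have "curve_set s m \<subseteq> D" using assms unfolding bounding_curve_def by blast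
  then show ?thesis using B1_of_subset B2_of_subset by blast
qed

theorem mainTheorem5:
  fixes X :: "pt set" and n :: nat and V C :: "nat \<Rightarrow> pt set"
  assumes "\<And>i. i < n \<Longrightarrow> V i \<subseteq> X"
    and "\<And>i. i < n \<Longrightarrow> digital_disk (V i) \<and> thick (V i) \<and> digitally_convex (V i)"
    and "\<And>i. i < n \<Longrightarrow> \<exists>s m. bounding_curve (V i) s m \<and> C i = curve_set s m"
  shows "freezing_set X c2_adj
           ((X - (\<Union>i<n. V i)) \<union> (\<Union>i<n. B1_of (C i) \<union> B2_of (C i)))"
proof -
  let ?B = "(X - (\<Union>i<n. V i)) \<union> (\<Union>i<n. B1_of (C i) \<union> B2_of (C i))"
  have "B1_of (C i) \<union> B2_of (C i) \<subseteq> V i" if "i < n" for i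
  proof -
    obtain s m where "bounding_curve (V i) s m" "C i = curve_set s m"
      using assms(3)[OF \<open>i < n\<close>] by blast
    then show ?thesis using bounding_curve_B1_B2_subset by simp
  qed
  then have "?B \<subseteq> X" using assms(1) by blast
  moreover have "f x = x"
    if cont: "digitally_continuous X c2_adj f" and fix_B: "\<forall>b\<in>?B. f b = b" and "x \<in> X" for f x
  proof (cases "\<exists>i<n. x \<in> V i")
    case True
    then obtain i s m where i: "i < n" and x: "x \<in> V i"
      and bc: "bounding_curve (V i) s m" and Ci: "C i = curve_set s m"
      using assms(3) by blast
    have "\<forall>b\<in>B1_of (curve_set s m) \<union> B2_of (curve_set s m). f b = b"
      using fix_B i unfolding Ci[symmetric] by blast
    then show ?thesis using disk_fixed[OF cont bc assms(1)[OF i] _ x] by blast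
  next
    case False
    then have "x \<in> X - (\<Union>i<n. V i)" using \<open>x \<in> X\<close> by blast
    then show ?thesis using fix_B by blast
  qed
  ultimately show ?thesis unfolding freezing_set_def by blast
qed

end
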